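(* For sufficiently small $r>0$ there is a constant $C$ depending only on $r$ such that for all $z\in\mathbb{B}_n$ and all $w\in D_\psi(z,r)$, $$\Big|2\,\mathrm{Re}\Big(\frac{1}{1-\langle w,z\rangle}\Big)-\frac{1}{1-|z|^2}-\frac{1}{1-|w|^2}\Big|\le C.$$
   Context: $\mathbb{B}_n$ is the open unit ball of $\mathbb{C}^n$, $\langle z,w\rangle=\sum_jz_j\overline{w_j}$. For $z\ne0$, $P_z\zeta=\frac{\langle\zeta,z\rangle}{\langle z,z\rangle}z$, $P_0=0$, $Q_z=I-P_z$, and $D_\psi(z,r)=\{w\in\mathbb{B}_n:|z-P_zw|<r(1-|z|^2)^{3/2},\ |Q_zw|<r(1-|z|^2)\}$. *)

theory Defs
  imports "HOL-Analysis.Analysis"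
begin

definition cinner :: "complex ^ 'n \<Rightarrow> complex ^ 'n \<Rightarrow> complex" where
  "cinner z w = (\<Sum>j\<in>UNIV. z $ j * cnj (w $ j))"

definition unit_ball :: "(complex ^ 'n) set" where
  "unit_ball = {z. norm z < 1}"

definition Pz :: "complex ^ 'n \<Rightarrow> complex ^ 'n \<Rightarrow> complex ^ 'n" where
  "Pz z \<zeta> = (if z = 0 then 0 else (cinner \<zeta> z / cinner z z) *s z)"

definition Qz :: "complex ^ 'n \<Rightarrow> complex ^ 'n \<Rightarrow> complex ^ 'n" where
  "Qz z \<zeta> = \<zeta> - Pz z \<zeta>"

definition D_psi :: "complex ^ 'n \<Rightarrow> real \<Rightarrow> (complex ^ 'n) set" where
  "D_psi z r = {w \<in> unit_ball. norm (z - Pz z w) < r * (1 - (norm z)\<^sup>2) powr (3/2)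
                              \<and> norm (Qz z w) < r * (1 - (norm z)\<^sup>2)}"

end

theory Submission
  imports Defs
begin

text \<open>Put \<open>\<delta> = 1 - |z|\<^sup>2\<close> and \<open>\<zeta> = 1 - \<langle>w,z\<rangle>\<close>. As \<open>P\<^sub>z w = (\<langle>w,z\<rangle>/|z|\<^sup>2) z\<close>,
  we get \<open>|\<zeta> - \<delta>| = |z| |z - P\<^sub>z w| \<le> r \<delta>\<^bsup>3/2\<^esup>\<close>, and by Pythagoras
  \<open>|w - z|\<^sup>2 = |z - P\<^sub>z w|\<^sup>2 + |Q\<^sub>z w|\<^sup>2 \<le> 2 r\<^sup>2 \<delta>\<^sup>2\<close>. Since
  \<open>1 - |w|\<^sup>2 = 2 Re \<zeta> - \<delta> - |w - z|\<^sup>2\<close>, the claim reduces to a real estimate in three steps,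
  each costing \<open>O(r\<^sup>2)\<close>: replace \<open>2 Re (1/\<zeta>)\<close> by \<open>2 / Re \<zeta>\<close> (error quadratic in
  \<open>Im \<zeta>\<close>), replace \<open>2 / Re \<zeta>\<close> by \<open>1/\<delta> + 1/(2 Re \<zeta> - \<delta>)\<close> (harmonic versus arithmetic
  mean, error quadratic in \<open>Re \<zeta> - \<delta>\<close>), and drop \<open>|w - z|\<^sup>2\<close> from the last denominator.\<close>

lemma cinner_diff_left: "cinner (x - y) v = cinner x v - cinner y v"
  unfolding cinner_def by (simp add: algebra_simps sum_subtractf)

lemma cinner_diff_right: "cinner v (x - y) = cinner v x - cinner v y"
  unfolding cinner_def by (simp add: algebra_simps sum_subtractf)

lemma cinner_scale_left: "cinner (c *s x) v = c * cinner x v"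
  unfolding cinner_def by (simp add: sum_distrib_left algebra_simps)

lemma cinner_scale_right: "cinner v (c *s x) = cnj c * cinner v x"
  unfolding cinner_def by (simp add: sum_distrib_left algebra_simps)

lemma cnj_cinner: "cnj (cinner x y) = cinner y x"
  unfolding cinner_def by (simp add: algebra_simps)

lemma cinner_zero_right [simp]: "cinner x 0 = 0"
  unfolding cinner_def by simp

lemma cinner_self_eq_norm_power2: "cinner x x = of_real ((norm x)^2)"
proof -
  have "(norm x)^2 = (\<Sum>i\<in>UNIV. (cmod (x$i))^2)"
    by (simp add: norm_vec_def L2_set_def sum_nonneg)
  then have "of_real ((norm x)^2) = (\<Sum>i\<in>UNIV. of_real ((cmod (x$i))^2) :: complex)"
    by simp
  also have "\<dots> = cinner x x"
    unfolding cinner_def by (rule sum.cong[OF refl]) (rule complex_norm_square)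
  finally show ?thesis ..
qed

lemma norm_diff_power2_cinner:
  "(norm (x - y))^2 = (norm x)^2 + (norm y)^2 - 2 * Re (cinner x y)"
proof -
  have "of_real ((norm (x - y))^2) = cinner (x - y) (x - y)"
    by (rule cinner_self_eq_norm_power2[symmetric])
  also have "\<dots> = cinner x x + cinner y y - (cinner x y + cnj (cinner x y))"
    by (simp add: cinner_diff_left cinner_diff_right cnj_cinner)
  finally show ?thesis
    by (simp add: cinner_self_eq_norm_power2 complex_eq_iff)
qed

lemma norm_vector_smult: "norm (c *s x) = cmod c * norm (x :: complex ^ 'n)"
proof -
  have "of_real ((norm (c *s x))^2) = cinner (c *s x) (c *s x)"
    by (rule cinner_self_eq_norm_power2[symmetric])
  also have "\<dots> = c * cnj c * cinner x x"
    by (simp add: cinner_scale_left cinner_scale_right)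
  also have "\<dots> = of_real ((cmod c)^2) * of_real ((norm x)^2)"
    by (simp only: complex_norm_square cinner_self_eq_norm_power2)
  also have "\<dots> = of_real ((cmod c * norm x)^2)"
    by (simp add: power_mult_distrib)
  finally show ?thesis
    by (metis norm_ge_zero of_real_eq_iff power2_eq_imp_eq zero_le_mult_iff)
qed

lemma Pz_eq: "Pz z w = (cinner w z / cinner z z) *s z"
  by (simp add: Pz_def)

lemma cinner_Qz_left_self: "cinner (Qz z w) z = 0"
  by (cases "z = 0")
    (simp_all add: Qz_def Pz_eq cinner_diff_left cinner_scale_left cinner_self_eq_norm_power2)

lemma norm_diff_Pz_mult_norm:
  "norm (z - Pz z w) * norm z = cmod (cinner w z - of_real ((norm z)^2))"
proof (cases "z = 0")
  case False
  define c where "c = cinner w z / of_real ((norm z)^2)"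
  have Pz_c: "z - Pz z w = (1 - c) *s z"
    by (simp add: Pz_eq c_def cinner_self_eq_norm_power2 vector_sub_rdistrib)
  have "norm (z - Pz z w) * norm z = cmod ((1 - c) * of_real ((norm z)^2))"
    unfolding Pz_c norm_vector_smult by (simp add: norm_mult power2_eq_square)
  also have "(1 - c) * of_real ((norm z)^2) = - (cinner w z - of_real ((norm z)^2))"
    using False by (simp add: c_def field_simps)
  finally show ?thesis
    by (simp add: norm_minus_commute)
qed simp

lemma norm_diff_eq_Pz_Qz:
  "(norm (w - z))^2 = (norm (z - Pz z w))^2 + (norm (Qz z w))^2"
proof -
  define c where "c = 1 - cinner w z / cinner z z"
  have "z - Pz z w = c *s z" and "w - z = Qz z w - c *s z"
    by (simp_all add: Qz_def Pz_eq c_def vector_sub_rdistrib)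
  then show ?thesis
    by (simp only: norm_diff_power2_cinner cinner_scale_right cinner_Qz_left_self) simp
qed

lemma cmod_cinner_diff_le_norm_diff_Pz:
  assumes "norm z \<le> 1"
  shows "cmod (cinner w z - of_real ((norm z)^2)) \<le> norm (z - Pz z w)"
proof -
  have "norm (z - Pz z w) * norm z \<le> norm (z - Pz z w)"
    using assms by (rule mult_left_le) simp
  then show ?thesis
    by (simp only: norm_diff_Pz_mult_norm)
qed

lemma D_psi_bounds:
  assumes z: "z \<in> unit_ball" and w: "w \<in> D_psi z r"
  shows "(cmod (cinner w z - of_real ((norm z)^2)))^2 \<le> r^2 * (1 - (norm z)^2)^3"
    and "(norm (w - z))^2 \<le> 2 * r^2 * (1 - (norm z)^2)^2"
proof -
  define \<delta> where "\<delta> = 1 - (norm z)^2"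
  have "norm z < 1"
    using z by (simp add: unit_ball_def)
  then have \<delta>: "0 < \<delta>" "\<delta> \<le> 1"
    by (auto simp: \<delta>_def power_less_one_iff)
  have P: "norm (z - Pz z w) < r * \<delta> powr (3/2)" and Q: "norm (Qz z w) < r * \<delta>"
    using w by (auto simp: D_psi_def \<delta>_def)
  have "(norm (z - Pz z w))^2 \<le> (r * \<delta> powr (3/2))^2"
    using P by (intro power_mono) auto
  also have "\<dots> = r^2 * \<delta> powr 3"
    using \<delta> by (simp add: power_mult_distrib powr_power)
  also have "\<dots> = r^2 * \<delta>^3"
    using \<delta> by (simp add: powr_numeral)
  finally have P2: "(norm (z - Pz z w))^2 \<le> r^2 * \<delta>^3" .
  have "(cmod (cinner w z - of_real ((norm z)^2)))^2 \<le> (norm (z - Pz z w))^2"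
    using cmod_cinner_diff_le_norm_diff_Pz[of z w] \<open>norm z < 1\<close> by (intro power_mono) auto
  from this P2 show "(cmod (cinner w z - of_real ((norm z)^2)))^2 \<le> r^2 * (1 - (norm z)^2)^3"
    unfolding \<delta>_def by (rule order_trans)
  have "(norm (Qz z w))^2 \<le> (r * \<delta>)^2"
    using Q by (intro power_mono) auto
  moreover have "r^2 * \<delta>^3 \<le> r^2 * \<delta>^2"
    using \<delta> by (simp add: mult_left_mono power_decreasing)
  ultimately show "(norm (w - z))^2 \<le> 2 * r^2 * (1 - (norm z)^2)^2"
    using P2 norm_diff_eq_Pz_Qz[of w z] by (simp add: \<delta>_def power_mult_distrib)
qed

lemma two_Re_inverse_approx:
  fixes \<zeta> :: complex
  assumes "0 < Re \<zeta>"
  shows "\<bar>2 * Re (1 / \<zeta>) - 2 / Re \<zeta>\<bar> \<le> 2 * (Im \<zeta>)^2 / (Re \<zeta>)^3"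
proof -
  define x y where "x = Re \<zeta>" and "y = Im \<zeta>"
  have x: "0 < x" using assms by (simp add: x_def)
  have "2 * Re (1 / \<zeta>) - 2 / x = - (2 * y^2 / (x * (x^2 + y^2)))"
    using x by (simp add: Re_divide x_def y_def field_simps power2_eq_square)
  also have "\<bar>\<dots>\<bar> \<le> 2 * y^2 / (x * x^2)"
    using x by (simp add: frac_le mult_left_mono)
  finally show ?thesis by (simp add: x_def y_def power3_eq_cube power2_eq_square mult.assoc)
qed

lemma abs_harmonic_mean_defect:
  fixes a b :: real
  assumes "0 < a" "0 < b"
  shows "\<bar>4/(a + b) - 1/a - 1/b\<bar> = (a - b)^2 / (a * b * (a + b))"
proof -
  have "1/a + 1/b - 4/(a + b) = (a - b)^2 / (a * b * (a + b))"
    using assms by (simp add: field_simps power2_eq_square)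
  moreover have "0 \<le> (a - b)^2 / (a * b * (a + b))"
    using assms by simp
  ultimately show ?thesis
    by linarith
qed

lemma abs_inverse_diff_inverse_sub:
  fixes a m :: real
  assumes "0 \<le> m" "m < a"
  shows "\<bar>1/a - 1/(a - m)\<bar> = m / (a * (a - m))"
proof -
  have "1/(a - m) - 1/a = m / (a * (a - m))"
    using assms by (simp add: field_simps)
  moreover have "0 \<le> m / (a * (a - m))"
    using assms by simp
  ultimately show ?thesis
    by linarith
qed

lemma harmonic_mean_defect_le:
  fixes x \<delta> e :: real
  assumes \<delta>: "0 < \<delta>" and x_ge: "3/4 * \<delta> \<le> x"
    and x_close: "(x - \<delta>)^2 \<le> e * \<delta>^3"
  shows "\<bar>2 / x - 1/\<delta> - 1/(2 * x - \<delta>)\<bar> \<le> 16/3 * e"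
proof -
  have "\<bar>2 / x - 1/\<delta> - 1/(2 * x - \<delta>)\<bar> = 4 * (x - \<delta>)^2 / (\<delta> * (2 * x - \<delta>) * (2 * x))"
    using abs_harmonic_mean_defect[of \<delta> "2 * x - \<delta>"] x_ge \<delta>
    by (simp add: power2_eq_square algebra_simps)
  also have "\<dots> \<le> 4 * (e * \<delta>^3) / (\<delta> * (\<delta>/2) * (3/2 * \<delta>))"
  proof (rule frac_le)
    have factors_le: "\<delta> * (\<delta>/2) \<le> \<delta> * (2 * x - \<delta>)"
      using x_ge \<delta> by (intro mult_left_mono) auto
    show "\<delta> * (\<delta>/2) * (3/2 * \<delta>) \<le> \<delta> * (2 * x - \<delta>) * (2 * x)"
      by (rule mult_mono[OF factors_le]) (use x_ge \<delta> in auto)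
  qed (use x_close \<delta> in \<open>auto intro: order_trans[OF zero_le_power2]\<close>)
  also have "\<dots> = 16/3 * e"
    using \<delta> by (simp add: field_simps power3_eq_cube)
  finally show ?thesis .
qed

lemma defect_scalar_bound:
  fixes \<zeta> :: complex and \<delta> r m :: real
  assumes \<delta>: "0 < \<delta>" "\<delta> \<le> 1" and r: "0 \<le> r" "r \<le> 1/4"
    and close: "(cmod (\<zeta> - of_real \<delta>))^2 \<le> r^2 * \<delta>^3"
    and m: "0 \<le> m" "m \<le> 2 * r^2 * \<delta>^2"
  shows "\<bar>2 * Re (1 / \<zeta>) - 1/\<delta> - 1/(2 * Re \<zeta> - \<delta> - m)\<bar> \<le> 2"
proof -
  define x y where "x = Re \<zeta>" and "y = Im \<zeta>"
  have r2: "r^2 \<le> 1/16"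
    using power_mono[OF r(2) r(1), of 2] by (simp add: power_divide)
  have r\<delta>: "r^2 * \<delta>^3 \<le> r^2 * \<delta>^2" "r^2 * \<delta>^2 \<le> (\<delta>/4)^2"
    using \<delta> mult_right_mono[OF r2, of "\<delta>^2"]
    by (simp_all add: mult_left_mono power_decreasing power_divide)
  have "(x - \<delta>)^2 + y^2 \<le> r^2 * \<delta>^3"
    using close by (simp add: x_def y_def cmod_power2)
  then have x_close: "(x - \<delta>)^2 \<le> r^2 * \<delta>^3" and y_small: "y^2 \<le> r^2 * \<delta>^3"
    by (smt (verit) zero_le_power2)+
  then have "\<bar>x - \<delta>\<bar> \<le> \<delta>/4"
    using \<delta> r\<delta> abs_le_square_iff[of "x - \<delta>" "\<delta>/4"] by simp
  then have x_ge: "3/4 * \<delta> \<le> x"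
    by linarith
  have "m \<le> \<delta>^2 / 8"
    using m(2) r\<delta>(2) by (simp add: power_divide)
  also have "\<dots> \<le> \<delta> / 8"
    using \<delta> by (simp add: power2_eq_square mult_le_cancel_right1)
  finally have m_le: "m \<le> \<delta>/8" .
  have "\<bar>2 * Re (1 / \<zeta>) - 2 / x\<bar> \<le> 2 * y^2 / x^3"
    using two_Re_inverse_approx[of \<zeta>] x_ge \<delta> by (simp add: x_def y_def)
  also have "\<dots> \<le> 2 * (r^2 * \<delta>^3) / (3/4 * \<delta>)^3"
    using y_small x_ge \<delta> by (intro frac_le power_mono) auto
  also have "\<dots> = 128/27 * r^2"
    using \<delta> by (simp add: field_simps power3_eq_cube)
  finally have re_step: "\<bar>2 * Re (1 / \<zeta>) - 2 / x\<bar> \<le> 1"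
    using r2 by simp
  have "\<bar>2 / x - 1/\<delta> - 1/(2 * x - \<delta>)\<bar> \<le> 16/3 * r^2"
    using harmonic_mean_defect_le x_ge x_close \<delta> by blast
  then have harmonic_step: "\<bar>2 / x - 1/\<delta> - 1/(2 * x - \<delta>)\<bar> \<le> 1/3"
    using r2 by simp
  have "\<bar>1/(2 * x - \<delta>) - 1/(2 * x - \<delta> - m)\<bar> = m / ((2 * x - \<delta>) * (2 * x - \<delta> - m))"
    using abs_inverse_diff_inverse_sub m x_ge m_le \<delta> by simp
  also have "\<dots> \<le> 2 * r^2 * \<delta>^2 / ((\<delta>/2) * (3/8 * \<delta>))"
    using m x_ge m_le \<delta> by (intro frac_le mult_mono) auto
  also have "\<dots> = 32/3 * r^2"
    using \<delta> by (simp add: field_simps power2_eq_square)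
  finally have denominator_step: "\<bar>1/(2 * x - \<delta>) - 1/(2 * x - \<delta> - m)\<bar> \<le> 2/3"
    using r2 by simp
  show ?thesis
    using re_step harmonic_step denominator_step unfolding x_def by linarith
qed

theorem lemma2p12:
  shows "\<exists>r0>0. \<forall>r. 0 < r \<and> r < r0 \<longrightarrow>
           (\<exists>C::real. \<forall>(z::complex ^ 'n) \<in> unit_ball. \<forall>w \<in> D_psi z r.
              \<bar>2 * Re (1 / (1 - cinner w z)) - 1 / (1 - (norm z)\<^sup>2) - 1 / (1 - (norm w)\<^sup>2)\<bar> \<le> C)"
proof -
  have "\<bar>2 * Re (1 / (1 - cinner w z)) - 1 / (1 - (norm z)\<^sup>2) - 1 / (1 - (norm w)\<^sup>2)\<bar> \<le> 2"
    if r: "0 < r" "r < 1/4" and z: "z \<in> unit_ball" and w: "w \<in> D_psi z r"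
    for r and z w :: "complex ^ 'n"
  proof -
    define \<delta> \<zeta> where "\<delta> = 1 - (norm z)^2" and "\<zeta> = 1 - cinner w z"
    have "norm z < 1"
      using z by (simp add: unit_ball_def)
    then have "0 < \<delta>" "\<delta> \<le> 1"
      by (auto simp: \<delta>_def power_less_one_iff)
    moreover have "(cmod (\<zeta> - of_real \<delta>))^2 \<le> r^2 * \<delta>^3"
      using D_psi_bounds(1)[OF z w] by (simp add: \<delta>_def \<zeta>_def norm_minus_commute)
    moreover have "(norm (w - z))^2 \<le> 2 * r^2 * \<delta>^2"
      using D_psi_bounds(2)[OF z w] by (simp add: \<delta>_def)
    ultimately have "\<bar>2 * Re (1 / \<zeta>) - 1/\<delta> - 1/(2 * Re \<zeta> - \<delta> - (norm (w - z))^2)\<bar> \<le> 2"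
      using r by (intro defect_scalar_bound) auto
    moreover have "1 - (norm w)^2 = 2 * Re \<zeta> - \<delta> - (norm (w - z))^2"
      by (simp add: norm_diff_power2_cinner \<delta>_def \<zeta>_def)
    ultimately show ?thesis
      by (simp only: \<delta>_def[symmetric] \<zeta>_def[symmetric])
  qed
  then show ?thesis
    by (intro exI[of _ "1/4"]) auto
qed

end
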